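(* Let $\Gamma$ be a labeled oriented tree of Coxeter type with vertex set $\mathbf{x}$, and let $e=(x\xrightarrow{w}y)$ be an edge of $\Gamma$, with relator $r_e=xw(wy)^{-1}$. Then, in the group $\langle \mathbf{x}\mid x^2,\ x\in\mathbf{x}\rangle$, the relator $r_e$ reduces, up to cyclic permutation, to $\bar r_e=(yx)^{m_e}$ for some odd integer $m_e\ge 1$.
   Context: A labeled oriented tree (LOT) $\Gamma$ is a finite tree with vertex set $\mathbf{x}$ whose edges are oriented and each edge is labeled by a (possibly empty) word $w$ in the letters $\mathbf{x}^{\pm1}$; $e=(x\xrightarrow{w}y)$ denotes the edge from $x$ to $y$ labeled $w$. Its presentation is $P(\Gamma)=\langle \mathbf{x}\mid r_e,\ e \text{ an edge}\rangle$ with $r_e=xw(wy)^{-1}$. $\Gamma$ is of Coxeter type if for every edge $e=(x\xrightarrow{w}y)$, every letter $z\neq x,y$ occurs in $w$ only with even (positive or negative) exponent, i.e. only in syllables $z^p$ with $p$ even. *)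

theory Defs
  imports Main
begin

text \<open>Letters of words in the alphabet x^{+-1}: a pair (generator, inverted?).
  (z, False) is z, (z, True) is z^{-1}.\<close>
type_synonym 'a letter = "'a \<times> bool"

definition inv_word :: "'a letter list \<Rightarrow> 'a letter list" where
  "inv_word w = rev (map (\<lambda>(a, b). (a, \<not> b)) w)"

text \<open>An oriented edge x --w--> y is a triple (x, w, y). A LOT is given by its vertex set
  and its list of edges; its underlying graph must be a finite tree (connected, |E| = |V| - 1).\<close>
definition edge_rel :: "('a \<times> 'a letter list \<times> 'a) list \<Rightarrow> ('a \<times> 'a) set" where
  "edge_rel E = {(x, y) | x w y. (x, w, y) \<in> set E} \<union> {(y, x) | x w y. (x, w, y) \<in> set E}"

definition is_LOT :: "'a set \<Rightarrow> ('a \<times> 'a letter list \<times> 'a) list \<Rightarrow> bool" where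
  "is_LOT V E \<longleftrightarrow> finite V \<and> V \<noteq> {} \<and>
     (\<forall>(x, w, y) \<in> set E. x \<in> V \<and> y \<in> V \<and> x \<noteq> y \<and> fst ` set w \<subseteq> V) \<and>
     length E + 1 = card V \<and>
     (\<forall>a \<in> V. \<forall>b \<in> V. (a, b) \<in> (edge_rel E)\<^sup>*)"

definition expsum :: "'a letter list \<Rightarrow> int" where
  "expsum s = (\<Sum>l\<leftarrow>s. if snd l then -1 else 1)"

text \<open>Every letter z different from x, y occurs in w only in syllables z^p
  (maximal subwords in the letters z^{+-1}) with p even.\<close>
definition coxeter_edge :: "'a \<Rightarrow> 'a letter list \<Rightarrow> 'a \<Rightarrow> bool" where
  "coxeter_edge x w y \<longleftrightarrow>
     (\<forall>u s v z. w = u @ s @ v \<and> s \<noteq> [] \<and> (\<forall>l \<in> set s. fst l = z) \<and>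
        (u = [] \<or> fst (last u) \<noteq> z) \<and> (v = [] \<or> fst (hd v) \<noteq> z) \<and>
        z \<noteq> x \<and> z \<noteq> y \<longrightarrow> even (expsum s))"

definition coxeter_type :: "('a \<times> 'a letter list \<times> 'a) list \<Rightarrow> bool" where
  "coxeter_type E \<longleftrightarrow> (\<forall>(x, w, y) \<in> set E. coxeter_edge x w y)"

definition relator :: "'a \<Rightarrow> 'a letter list \<Rightarrow> 'a \<Rightarrow> 'a letter list" where
  "relator x w y = [(x, False)] @ w @ inv_word (w @ [(y, False)])"

text \<open>The group <x | x^2, x in x>: a letter z^{+-1} maps to the generator z (= z^{-1});
  elements are represented by their unique reduced words (no two adjacent equal letters).\<close>
fun push :: "'a \<Rightarrow> 'a list \<Rightarrow> 'a list" where
  "push a [] = [a]"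
| "push a (b # bs) = (if a = b then bs else a # b # bs)"

fun cox_reduce :: "'a list \<Rightarrow> 'a list" where
  "cox_reduce [] = []"
| "cox_reduce (a # w) = push a (cox_reduce w)"

definition to_cox :: "'a letter list \<Rightarrow> 'a list" where
  "to_cox w = cox_reduce (map fst w)"

end

theory Submission
  imports Defs
begin

text \<open>Modulo the relations \<open>z\<^sup>2 = 1\<close>, every syllable of a letter \<open>z \<notin> {x, y}\<close> in \<open>w\<close> has even
  length and cancels, so \<open>w\<close> reduces to a word in \<open>x, y\<close>, and hence so do \<open>w\<^sup>-\<^sup>1\<close> and \<open>r\<^sub>e\<close>.
  A reduced word in two letters alternates. Reduction preserves the parity of the number of
  occurrences of each letter, and \<open>r\<^sub>e\<close> contains \<open>x\<close> and \<open>y\<close> an odd number of times each; an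
  alternating word with this property has the form \<open>(xy)\<^sup>m\<close> or \<open>(yx)\<^sup>m\<close> with \<open>m\<close> odd.\<close>

lemma distinct_adj_push: "distinct_adj r \<Longrightarrow> distinct_adj (push a r)"
  by (cases r) (auto simp: distinct_adj_Cons)

lemma distinct_adj_cox_reduce: "distinct_adj (cox_reduce w)"
  by (induction w) (auto intro: distinct_adj_push)

lemma cox_reduce_distinct_adj: "distinct_adj w \<Longrightarrow> cox_reduce w = w"
  by (induction w rule: remdups_adj.induct) auto

lemma push_push: "distinct_adj r \<Longrightarrow> push a (push a r) = r"
  by (cases r rule: remdups_adj.cases) auto

lemma push_push_cox_reduce [simp]: "push a (push a (cox_reduce w)) = cox_reduce w"
  by (simp add: push_push distinct_adj_cox_reduce)

lemma cox_reduce_replicate_even_append: "cox_reduce (replicate (2 * k) a @ w) = cox_reduce w"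
  by (induction k) simp_all

lemma cox_reduce_push_append: "cox_reduce (push a r @ w) = cox_reduce (a # r @ w)"
  by (cases r) auto

lemma cox_reduce_append_reduce_left: "cox_reduce (cox_reduce u @ w) = cox_reduce (u @ w)"
  by (induction u) (simp_all add: cox_reduce_push_append)

lemma cox_reduce_append_reduce_right: "cox_reduce (u @ cox_reduce w) = cox_reduce (u @ w)"
  by (induction u) (simp_all add: cox_reduce_distinct_adj distinct_adj_cox_reduce)

lemma cox_reduce_rev: "cox_reduce (rev w) = rev (cox_reduce w)"
proof (induction w)
  case (Cons a w)
  have snoc: "cox_reduce (rev r @ [a]) = rev (push a r)" if "distinct_adj r" for r
  proof (cases r)
    case (Cons b bs)
    show ?thesis
    proof (cases "a = b")
      case True
      have "cox_reduce (rev bs @ [a, a]) = cox_reduce (rev bs)"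
        using cox_reduce_append_reduce_right[of "rev bs" "[a, a]"] by simp
      then show ?thesis
        using Cons True that by (simp add: cox_reduce_distinct_adj distinct_adj_ConsD)
    next
      case False
      then have "distinct_adj (a # r)" using that Cons by simp
      then have "cox_reduce (rev (a # r)) = rev (a # r)"
        by (simp only: cox_reduce_distinct_adj distinct_adj_rev)
      then show ?thesis using Cons False by simp
    qed
  qed simp
  have "cox_reduce (rev (a # w)) = cox_reduce (rev (cox_reduce w) @ [a])"
    using Cons.IH cox_reduce_append_reduce_left[of "rev w" "[a]"] by simp
  also have "\<dots> = rev (cox_reduce (a # w))"
    using snoc[OF distinct_adj_cox_reduce] by simp
  finally show ?case .
qed simp

lemma set_push_subset: "set (push a r) \<subseteq> insert a (set r)"
  by (cases r) auto

lemma set_cox_reduce_subset: "set (cox_reduce w) \<subseteq> set w"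
  by (induction w) (use set_push_subset in fastforce)+

lemma even_count_list_push: "even (count_list (push a r) b) \<longleftrightarrow> even (count_list (a # r) b)"
  by (cases r) auto

lemma even_count_list_cox_reduce: "even (count_list (cox_reduce w) b) \<longleftrightarrow> even (count_list w b)"
  by (induction w) (simp_all add: even_count_list_push)

lemma even_expsum_iff: "even (expsum s) \<longleftrightarrow> even (length s)"
  by (induction s) (auto simp: expsum_def)

lemma coxeter_edge_drop_prefix:
  assumes "coxeter_edge x (u @ v) y"
    and "u = [] \<or> v = [] \<or> fst (last u) \<noteq> fst (hd v) \<or> fst (last u) \<in> {x, y}"
  shows "coxeter_edge x v y"
  unfolding coxeter_edge_def
proof (intro allI impI)
  fix a s b z
  assume syllable: "v = a @ s @ b \<and> s \<noteq> [] \<and> (\<forall>l\<in>set s. fst l = z) \<and>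
    (a = [] \<or> fst (last a) \<noteq> z) \<and> (b = [] \<or> fst (hd b) \<noteq> z) \<and> z \<noteq> x \<and> z \<noteq> y"
  have "u @ a = [] \<or> fst (last (u @ a)) \<noteq> z"
  proof (cases "a = []")
    case True
    then have "fst (hd v) = z" using syllable by (cases s) auto
    then show ?thesis using True syllable assms(2) by auto
  qed (use syllable in auto)
  then show "even (expsum s)"
    using assms(1)[unfolded coxeter_edge_def, rule_format, of "u @ a" s b z] syllable by simp
qed

lemma set_to_cox_coxeter_edge: "coxeter_edge x w y \<Longrightarrow> set (to_cox w) \<subseteq> {x, y}"
proof (induction "length w" arbitrary: w rule: less_induct)
  case less
  show ?case
  proof (cases w)
    case (Cons l w')
    show ?thesis
    proof (cases "fst l \<in> {x, y}")
      case True
      then have "coxeter_edge x w' y"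
        using coxeter_edge_drop_prefix[of x "[l]" w' y] less.prems Cons by simp
      then show ?thesis
        using less.hyps Cons True set_push_subset[of "fst l" "to_cox w'"] by (auto simp: to_cox_def)
    next
      case False
      define z where "z = fst l"
      define s where "s = takeWhile (\<lambda>m. fst m = z) w"
      define v where "v = dropWhile (\<lambda>m. fst m = z) w"
      have w: "w = s @ v" unfolding s_def v_def by simp
      have "s \<noteq> []" unfolding s_def z_def using Cons by simp
      have s_letters: "\<forall>m\<in>set s. fst m = z" unfolding s_def by (auto dest: set_takeWhileD)
      have v_start: "v = [] \<or> fst (hd v) \<noteq> z" unfolding v_def using hd_dropWhile by blast
      have "even (expsum s)"
        using less.prems[unfolded coxeter_edge_def, rule_format, of "[]" s v z]
          \<open>s \<noteq> []\<close> s_letters v_start False w z_def by auto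
      then obtain k where "length s = 2 * k" by (auto simp: even_expsum_iff elim: evenE)
      moreover have "map fst s = replicate (length s) z"
        using s_letters by (simp add: map_replicate_const[symmetric] cong: map_cong)
      ultimately have "map fst s = replicate (2 * k) z" by simp
      then have "to_cox w = to_cox v"
        using cox_reduce_replicate_even_append by (simp add: w to_cox_def)
      moreover have "coxeter_edge x v y"
        using coxeter_edge_drop_prefix[of x s v y] less.prems w s_letters \<open>s \<noteq> []\<close> v_start
        by auto
      ultimately show ?thesis using less.hyps w \<open>s \<noteq> []\<close> by simp
    qed
  qed (simp add: to_cox_def)
qed

lemma map_fst_relator: "map fst (relator x w y) = x # map fst w @ y # rev (map fst w)"
  by (simp add: relator_def inv_word_def rev_map[symmetric] case_prod_beta)

lemma to_cox_relator:
  "to_cox (relator x w y) = cox_reduce (x # to_cox w @ y # rev (to_cox w))"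
proof -
  let ?W = "map fst w"
  have "cox_reduce (x # to_cox w @ y # rev (to_cox w))
      = cox_reduce ((x # to_cox w @ [y]) @ cox_reduce (rev ?W))"
    by (simp add: to_cox_def cox_reduce_rev)
  also have "\<dots> = push x (cox_reduce (cox_reduce ?W @ y # rev ?W))"
    by (simp only: cox_reduce_append_reduce_right) (simp add: to_cox_def)
  also have "\<dots> = to_cox (relator x w y)"
    by (simp add: to_cox_def map_fst_relator cox_reduce_append_reduce_left)
  finally show ?thesis ..
qed

lemma set_to_cox_relator:
  assumes "coxeter_edge x w y"
  shows "set (to_cox (relator x w y)) \<subseteq> {x, y}"
  using set_to_cox_coxeter_edge[OF assms] set_cox_reduce_subset
  unfolding to_cox_relator by fastforce

lemma odd_count_list_to_cox_relator:
  assumes "x \<noteq> y" and "z \<in> {x, y}"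
  shows "odd (count_list (to_cox (relator x w y)) z)"
  unfolding to_cox_def even_count_list_cox_reduce using assms by (auto simp: map_fst_relator)

fun alternating :: "'a \<Rightarrow> 'a \<Rightarrow> nat \<Rightarrow> 'a list" where
  "alternating a b 0 = []"
| "alternating a b (Suc n) = a # alternating b a n"

lemma distinct_adj_alternating: "a \<noteq> b \<Longrightarrow> distinct_adj (alternating a b n)"
proof (induction n arbitrary: a b)
  case (Suc n)
  then show ?case by (cases n) auto
qed simp

lemma alternating_double: "alternating a b (2 * n) = concat (replicate n [a, b])"
  by (induction n) auto

lemma count_list_alternating:
  "a \<noteq> b \<Longrightarrow>
    count_list (alternating a b n) a = (n + 1) div 2 \<and> count_list (alternating a b n) b = n div 2"
  by (induction n arbitrary: a b) auto

lemma distinct_adj_two_letters_eq_alternating: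
  "distinct_adj (a # t) \<Longrightarrow> set t \<subseteq> {a, b} \<Longrightarrow> a # t = alternating a b (length (a # t))"
proof (induction t arbitrary: a b)
  case (Cons c t)
  then have "c = b" by auto
  with Cons show ?case using Cons.IH[of c a] by (auto simp: insert_commute)
qed simp

lemma rotate1_concat_replicate_pair:
  "rotate1 (concat (replicate n [a, b])) = concat (replicate n [b, a])"
proof -
  have "concat (replicate n [a, b]) @ [a] = a # concat (replicate n [b, a])"
    by (induction n) auto
  then show ?thesis by (cases n) auto
qed

lemma distinct_adj_two_letters_rotate:
  assumes "x \<noteq> y" and "distinct_adj t" and "set t \<subseteq> {x, y}"
    and "odd (count_list t x)" and "odd (count_list t y)"
  shows "\<exists>m k. odd m \<and> rotate k t = concat (replicate m [y, x])"
proof -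
  obtain a t' where t: "t = a # t'"
    using assms(4) by (cases t) auto
  define b where "b = (if a = x then y else x)"
  have ab: "{a, b} = {x, y}" "a \<noteq> b"
    using t assms(1,3) b_def by auto
  define L where "L = length t"
  have alt: "t = alternating a b L"
    using distinct_adj_two_letters_eq_alternating[of a t' b] assms(2,3) ab t L_def by simp
  have "odd (count_list t a)" "odd (count_list t b)"
    using assms(3-5) t b_def by auto
  then have odd_halves: "odd ((L + 1) div 2)" "odd (L div 2)"
    using count_list_alternating[OF ab(2), of L] by (simp_all add: alt)
  then have "even L" by presburger
  then obtain n where n: "L = 2 * n" "odd n"
    using odd_halves(2) by (auto elim: evenE)
  then have t_pairs: "t = concat (replicate n [a, b])"
    using alt alternating_double by simp
  show ?thesis
  proof (cases "a = y")
    case True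
    then have "rotate 0 t = concat (replicate n [y, x])"
      using t_pairs ab by auto
    then show ?thesis using n by blast
  next
    case False
    then have "rotate 1 t = concat (replicate n [y, x])"
      using t_pairs ab b_def rotate1_concat_replicate_pair by auto
    then show ?thesis using n by blast
  qed
qed

theorem lemma2p3:
  fixes V :: "'a set" and E :: "('a \<times> 'a letter list \<times> 'a) list"
    and x y :: 'a and w :: "'a letter list"
  assumes "is_LOT V E" and "coxeter_type E" and "(x, w, y) \<in> set E"
  shows "\<exists>m::nat. odd m \<and> m \<ge> 1 \<and>
           (\<exists>k. cox_reduce (rotate k (to_cox (relator x w y))) = concat (replicate m [y, x]))"
proof -
  have "x \<noteq> y" using assms(1,3) unfolding is_LOT_def by auto
  have "coxeter_edge x w y" using assms(2,3) unfolding coxeter_type_def by auto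
  let ?t = "to_cox (relator x w y)"
  have "distinct_adj ?t" by (simp add: to_cox_def distinct_adj_cox_reduce)
  moreover have "set ?t \<subseteq> {x, y}" by (rule set_to_cox_relator[OF \<open>coxeter_edge x w y\<close>])
  moreover have "odd (count_list ?t x)" "odd (count_list ?t y)"
    using odd_count_list_to_cox_relator[OF \<open>x \<noteq> y\<close>] by simp_all
  ultimately obtain m k where "odd m" and rot: "rotate k ?t = concat (replicate m [y, x])"
    using distinct_adj_two_letters_rotate[OF \<open>x \<noteq> y\<close>] by blast
  have "distinct_adj (concat (replicate m [y, x]))"
    using distinct_adj_alternating[of y x "2 * m"] \<open>x \<noteq> y\<close> by (simp add: alternating_double)
  then have "cox_reduce (rotate k ?t) = concat (replicate m [y, x])"
    by (simp add: rot cox_reduce_distinct_adj)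
  moreover have "m \<ge> 1" using \<open>odd m\<close> by (cases m) auto
  ultimately show ?thesis using \<open>odd m\<close> by blast
qed

end
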